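(* Let $Y\colon\mathbb V^N\times\mathbb G^N\to\mathbb R^N$ be a component balanced allocation rule on the class of network games. Then its standard extension $\Psi^Y$ is component balanced, i.e., for every $(v,\rho)\in\mathbb V^N\times\mathbb P^N$ with $v$ component additive and every component $h\in C(g(\rho))$, $\sum_{i\in N(h)}\Psi^Y_i(v,\rho)=\sum_{g\in\mathbb G(\rho)}\rho(g)\cdot v(g\cap h)$.
   Context: $N=\{1,\dots,n\}$ is a finite player set. A link is an unordered pair $ij$ of distinct players; $g_N$ is the set of all links; a network is any $g\subseteq g_N$; $\mathbb G^N$ is the set of all networks. For a network $g$, $N(g)$ is the set of players with at least one link in $g$ and $N_0(g)=N\setminus N(g)$. A component of $g$ is a nonempty subnetwork $h\subseteq g$ that is connected (any two players of $N(h)$ are joined by a path in $h$) and maximal (if $i\in N(h)$ and $ij\in g$ then $ij\in h$); $C(g)$ is the set of components of $g$. A network game is $v\colon\mathbb G^N\to\mathbb R$ with $v(\varnothing)=0$; $\mathbb V^N$ is the set of these; $v$ is component additive if $v(g)=\sum_{h\in C(g)}v(h)$ for all $g$. A network formation probability distribution is $\rho\colon\mathbb G^N\to[0,1]$ with $\sum_g\rho(g)=1$; $\mathbb P^N$ is the set of these; $\mathbb G(\rho)=\{g:\rho(g)>0\}$ and the extent is $g(\rho)=\bigcup_{g\in\mathbb G(\rho)}g$. An allocation rule on network games is a map $Y\colon\mathbb V^N\times\mathbb G^N\to\mathbb R^N$ with $Y_i(v,g)=0$ for every $i\in N_0(g)$; it is component balanced if for every component additive $v$, every network $g$ and every $h\in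 C(g)$, $\sum_{i\in N(h)}Y_i(v,g)=v(h)$. Its standard extension is $\Psi^Y(v,\rho)=\sum_{g\in\mathbb G^N}\rho(g)\,Y(v,g)$. *)

theory Defs
  imports Complex_Main
begin

text \<open>Players are the elements of a finite type 'n (so N = UNIV).
  A link is an unordered pair of distinct players, i.e. a 2-element set.\<close>

type_synonym 'n network = "'n set set"
type_synonym 'n game = "'n network \<Rightarrow> real"
type_synonym 'n alloc_rule = "'n game \<Rightarrow> 'n network \<Rightarrow> 'n \<Rightarrow> real"

definition links :: "'n set set" where
  "links = {l. \<exists>i j. i \<noteq> j \<and> l = {i, j}}"

definition networks :: "'n network set" where
  "networks = Pow links"

definition net_players :: "'n network \<Rightarrow> 'n set" where
  "net_players g = \<Union> g"

definition isolated :: "'n network \<Rightarrow> 'n set" where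
  "isolated g = UNIV - net_players g"

definition adj :: "'n network \<Rightarrow> ('n \<times> 'n) set" where
  "adj h = {(i, j). {i, j} \<in> h}"

definition connected_net :: "'n network \<Rightarrow> bool" where
  "connected_net h \<longleftrightarrow> (\<forall>i\<in>net_players h. \<forall>j\<in>net_players h. (i, j) \<in> (adj h)\<^sup>*)"

definition is_component :: "'n network \<Rightarrow> 'n network \<Rightarrow> bool" where
  "is_component h g \<longleftrightarrow> h \<noteq> {} \<and> h \<subseteq> g \<and> connected_net h \<and>
     (\<forall>i j. i \<in> net_players h \<longrightarrow> {i, j} \<in> g \<longrightarrow> {i, j} \<in> h)"

definition components :: "'n network \<Rightarrow> 'n network set" where
  "components g = {h. is_component h g}"

definition network_game :: "'n game \<Rightarrow> bool" where
  "network_game v \<longleftrightarrow> v {} = 0"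

definition component_additive :: "'n game \<Rightarrow> bool" where
  "component_additive v \<longleftrightarrow>
     (\<forall>g\<in>networks. v g = (\<Sum>h\<in>components g. v h))"

definition nfpd :: "('n network \<Rightarrow> real) \<Rightarrow> bool" where
  "nfpd \<rho> \<longleftrightarrow> (\<forall>g. 0 \<le> \<rho> g \<and> \<rho> g \<le> 1) \<and> (\<forall>g. g \<notin> networks \<longrightarrow> \<rho> g = 0)
      \<and> (\<Sum>g\<in>networks. \<rho> g) = 1"

definition support :: "('n network \<Rightarrow> real) \<Rightarrow> 'n network set" where
  "support \<rho> = {g \<in> networks. \<rho> g > 0}"

definition extent :: "('n network \<Rightarrow> real) \<Rightarrow> 'n network" where
  "extent \<rho> = \<Union> (support \<rho>)"

definition allocation_rule :: "('n::finite) alloc_rule \<Rightarrow> bool" where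
  "allocation_rule Y \<longleftrightarrow>
     (\<forall>v g i. network_game v \<longrightarrow> g \<in> networks \<longrightarrow> i \<in> isolated g \<longrightarrow> Y v g i = 0)"

definition component_balanced :: "('n::finite) alloc_rule \<Rightarrow> bool" where
  "component_balanced Y \<longleftrightarrow>
     (\<forall>v g h. network_game v \<longrightarrow> component_additive v \<longrightarrow> g \<in> networks \<longrightarrow>
        h \<in> components g \<longrightarrow> (\<Sum>i\<in>net_players h. Y v g i) = v h)"

definition standard_extension ::
  "('n::finite) alloc_rule \<Rightarrow> 'n game \<Rightarrow> ('n network \<Rightarrow> real) \<Rightarrow> 'n \<Rightarrow> real" where
  "standard_extension Y v \<rho> i = (\<Sum>g\<in>networks. \<rho> g * Y v g i)"

end

theory Submission
  imports Defs
begin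

text \<open>The standard extension is an average of Y v g over the networks g of the support, and each
  such g lies inside the extent. Since a component h of the extent is closed under the links of the
  extent, the components of g \<inter> h are exactly the components of g lying inside h, and every
  player of h that is active in g belongs to one of them. Players of h isolated in g receive
  nothing, so component balance of Y on these components and component additivity of v give
  \<open>\<Sum>i\<in>N(h). Y\<^sub>i(v, g) = v(g \<inter> h)\<close>; averaging over \<rho> finishes the proof.\<close>

lemma link_is_pair: "l \<in> links \<Longrightarrow> \<exists>a b. l = {a, b}"
  unfolding links_def by auto

lemma sym_adj: "sym (adj g)"
  unfolding adj_def sym_def by (auto simp: insert_commute)

lemma component_subset_component:
  assumes g: "g \<subseteq> links" "g \<subseteq> E" and h: "is_component h E" and c: "is_component c g"
    and i: "i \<in> net_players c" "i \<in> net_players h"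
  shows "c \<subseteq> h"
proof
  have reach: "x \<in> net_players h" if "(i, x) \<in> (adj c)\<^sup>*" for x
    using that
  proof (induction rule: rtrancl_induct)
    case base
    show ?case using i(2) .
  next
    case (step y z)
    then have "{y, z} \<in> E" using c g unfolding is_component_def adj_def by auto
    with step.IH have "{y, z} \<in> h" using h unfolding is_component_def by blast
    then show ?case unfolding net_players_def by auto
  qed
  fix l assume l: "l \<in> c"
  then obtain a b where lab: "l = {a, b}" using c g link_is_pair unfolding is_component_def by blast
  have "(i, a) \<in> (adj c)\<^sup>*"
    using c i(1) l lab unfolding is_component_def connected_net_def net_players_def by blast
  then have "a \<in> net_players h" by (rule reach)
  moreover have "{a, b} \<in> E" using l lab c g unfolding is_component_def by auto
  ultimately show "l \<in> h" using h lab unfolding is_component_def by blast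
qed

lemma components_net_players_disjoint:
  assumes "g \<subseteq> links" "c\<^sub>1 \<in> components g" "c\<^sub>2 \<in> components g" "c\<^sub>1 \<noteq> c\<^sub>2"
  shows "net_players c\<^sub>1 \<inter> net_players c\<^sub>2 = {}"
proof -
  have "c\<^sub>1 \<subseteq> c\<^sub>2 \<and> c\<^sub>2 \<subseteq> c\<^sub>1"
    if "i \<in> net_players c\<^sub>1" "i \<in> net_players c\<^sub>2" for i
    using assms(1-3) that component_subset_component[of g g]
    unfolding components_def by blast
  with assms(4) show ?thesis by blast
qed

definition component_of :: "'n network \<Rightarrow> 'n \<Rightarrow> 'n network" where
  "component_of g i = {l \<in> g. \<exists>x\<in>l. (i, x) \<in> (adj g)\<^sup>*}"

lemma rtrancl_adj_of_net_players_component_of: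
  assumes "g \<subseteq> links" and x: "x \<in> net_players (component_of g i)"
  shows "(i, x) \<in> (adj g)\<^sup>*"
proof -
  obtain l y where l: "l \<in> g" "x \<in> l" "y \<in> l" and y: "(i, y) \<in> (adj g)\<^sup>*"
    using x unfolding net_players_def component_of_def by auto
  obtain a b where "l = {a, b}" using l(1) assms(1) link_is_pair by blast
  with l have "x = y \<or> (y, x) \<in> adj g" unfolding adj_def by (auto simp: insert_commute)
  with y show ?thesis by (meson rtrancl_into_rtrancl)
qed

lemma rtrancl_adj_component_of:
  "(i, x) \<in> (adj g)\<^sup>* \<Longrightarrow> (i, x) \<in> (adj (component_of g i))\<^sup>*"
proof (induction rule: rtrancl_induct)
  case (step y z)
  then have "(y, z) \<in> adj (component_of g i)" unfolding adj_def component_of_def by auto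
  with step.IH show ?case by (meson rtrancl_into_rtrancl)
qed simp

lemma is_component_component_of:
  assumes g: "g \<subseteq> links" and i: "i \<in> net_players g"
  shows "is_component (component_of g i) g" and "i \<in> net_players (component_of g i)"
proof -
  let ?c = "component_of g i"
  obtain l where l: "l \<in> g" "i \<in> l" using i unfolding net_players_def by auto
  then show i_in: "i \<in> net_players ?c"
    unfolding net_players_def component_of_def by auto
  have from_i: "(i, x) \<in> (adj ?c)\<^sup>*" if "x \<in> net_players ?c" for x
    by (rule rtrancl_adj_component_of[OF rtrancl_adj_of_net_players_component_of[OF g that]])
  have sym_c: "sym ((adj ?c)\<^sup>*)" by (rule sym_rtrancl[OF sym_adj])
  have "connected_net ?c"
    unfolding connected_net_def
  proof (intro ballI)
    fix j k assume "j \<in> net_players ?c" "k \<in> net_players ?c"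
    then have "(j, i) \<in> (adj ?c)\<^sup>*" "(i, k) \<in> (adj ?c)\<^sup>*"
      by (auto intro: symD[OF sym_c] from_i)
    then show "(j, k) \<in> (adj ?c)\<^sup>*" by (rule rtrancl_trans)
  qed
  moreover have "?c \<noteq> {}" using i_in unfolding net_players_def by auto
  moreover have "?c \<subseteq> g" unfolding component_of_def by blast
  moreover have "{j, k} \<in> ?c" if "j \<in> net_players ?c" "{j, k} \<in> g" for j k
  proof -
    have "(i, j) \<in> (adj g)\<^sup>*" using rtrancl_adj_of_net_players_component_of[OF g that(1)] .
    with that(2) show ?thesis unfolding component_of_def by simp
  qed
  ultimately show "is_component ?c g" unfolding is_component_def by blast
qed

lemma net_players_eq_Union_components:
  assumes "g \<subseteq> links"
  shows "net_players g = (\<Union>c\<in>components g. net_players c)"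
proof
  show "net_players g \<subseteq> (\<Union>c\<in>components g. net_players c)"
  proof
    fix i assume "i \<in> net_players g"
    with is_component_component_of[OF assms] show "i \<in> (\<Union>c\<in>components g. net_players c)"
      unfolding components_def by blast
  qed
qed (auto simp: components_def is_component_def net_players_def)

lemma sum_net_players_components:
  fixes f :: "'n::finite \<Rightarrow> real"
  assumes "g \<subseteq> links"
  shows "(\<Sum>i\<in>net_players g. f i) = (\<Sum>c\<in>components g. \<Sum>i\<in>net_players c. f i)"
  unfolding net_players_eq_Union_components[OF assms]
  by (rule sum.UNION_disjoint) (auto dest: components_net_players_disjoint[OF assms])

lemma is_component_inter_component:
  assumes "g \<subseteq> E" "is_component h E" "is_component c (g \<inter> h)"
  shows "is_component c g"
  using assms unfolding is_component_def net_players_def by blast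

lemma net_players_inter_component:
  assumes "g \<subseteq> links" "g \<subseteq> E" "is_component h E"
  shows "net_players (g \<inter> h) = net_players g \<inter> net_players h"
proof
  show "net_players g \<inter> net_players h \<subseteq> net_players (g \<inter> h)"
  proof
    fix i assume i: "i \<in> net_players g \<inter> net_players h"
    then obtain l where l: "l \<in> g" "i \<in> l" unfolding net_players_def by auto
    moreover obtain a b where "l = {a, b}" using l(1) assms(1) link_is_pair by blast
    ultimately obtain j where "l = {i, j}" by auto
    with l i have "l \<in> h" using assms(2,3) unfolding is_component_def by blast
    with l show "i \<in> net_players (g \<inter> h)" unfolding net_players_def by blast
  qed
qed (auto simp: net_players_def)

lemma component_balanced_sum_inter_component:
  fixes Y :: "('n::finite) alloc_rule"
  assumes Y: "allocation_rule Y" "component_balanced Y"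
    and v: "network_game v" "component_additive v"
    and g: "g \<in> networks" "g \<subseteq> E" and h: "h \<in> components E"
  shows "(\<Sum>i\<in>net_players h. Y v g i) = v (g \<inter> h)"
proof -
  have links: "g \<subseteq> links" "g \<inter> h \<subseteq> links" using g(1) unfolding networks_def by auto
  have h_comp: "is_component h E" using h unfolding components_def by simp
  have "(\<Sum>i\<in>net_players h. Y v g i) = (\<Sum>i\<in>net_players g \<inter> net_players h. Y v g i)"
    by (rule sum.mono_neutral_right)
      (use Y(1) v(1) g(1) in \<open>auto simp: allocation_rule_def isolated_def\<close>)
  also have "\<dots> = (\<Sum>i\<in>net_players (g \<inter> h). Y v g i)"
    using net_players_inter_component[OF links(1) g(2) h_comp] by simp
  also have "\<dots> = (\<Sum>c\<in>components (g \<inter> h). \<Sum>i\<in>net_players c. Y v g i)"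
    by (rule sum_net_players_components[OF links(2)])
  also have "\<dots> = (\<Sum>c\<in>components (g \<inter> h). v c)"
  proof (rule sum.cong)
    fix c assume "c \<in> components (g \<inter> h)"
    then have "c \<in> components g"
      using is_component_inter_component[OF g(2) h_comp] unfolding components_def by blast
    then show "(\<Sum>i\<in>net_players c. Y v g i) = v c"
      using Y(2) v g(1) unfolding component_balanced_def by blast
  qed simp
  also have "\<dots> = v (g \<inter> h)"
    using v(2) links(2) unfolding component_additive_def networks_def by simp
  finally show ?thesis .
qed

lemma support_subset_networks: "support \<rho> \<subseteq> networks"
  unfolding support_def by blast

lemma standard_extension_eq_sum_support:
  assumes "nfpd \<rho>"
  shows "standard_extension Y v \<rho> i = (\<Sum>g\<in>support \<rho>. \<rho> g * Y v g i)"
proof -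
  have zero: "\<rho> g = 0" if "g \<in> networks - support \<rho>" for g
  proof -
    have "0 \<le> \<rho> g" using assms unfolding nfpd_def by blast
    with that show ?thesis unfolding support_def by auto
  qed
  show ?thesis
    unfolding standard_extension_def
    by (rule sum.mono_neutral_right) (use zero support_subset_networks in auto)
qed

theorem proposition5:
  fixes Y :: "('n::finite) alloc_rule" and v :: "'n game" and \<rho> :: "'n network \<Rightarrow> real"
    and h :: "'n network"
  assumes "allocation_rule Y"
    and "component_balanced Y"
    and "network_game v"
    and "component_additive v"
    and "nfpd \<rho>"
    and "h \<in> components (extent \<rho>)"
  shows "(\<Sum>i\<in>net_players h. standard_extension Y v \<rho> i)
           = (\<Sum>g\<in>support \<rho>. \<rho> g * v (g \<inter> h))"
proof -
  have "(\<Sum>i\<in>net_players h. standard_extension Y v \<rho> i)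
      = (\<Sum>g\<in>support \<rho>. \<rho> g * (\<Sum>i\<in>net_players h. Y v g i))"
    unfolding standard_extension_eq_sum_support[OF assms(5)] sum_distrib_left
    by (rule sum.swap)
  also have "\<dots> = (\<Sum>g\<in>support \<rho>. \<rho> g * v (g \<inter> h))"
  proof (rule sum.cong)
    fix g assume "g \<in> support \<rho>"
    then have "g \<in> networks" "g \<subseteq> extent \<rho>"
      using support_subset_networks unfolding extent_def by auto
    then show "\<rho> g * (\<Sum>i\<in>net_players h. Y v g i) = \<rho> g * v (g \<inter> h)"
      using component_balanced_sum_inter_component[OF assms(1-4) _ _ assms(6)] by simp
  qed simp
  finally show ?thesis .
qed

end
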